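(* Consider, for $\varepsilon>0$ and $|\sigma|\le\sigma_0\varepsilon$, the real analytic system $$\dot x=x(\sigma-az)+\tfrac{y}{\varepsilon}+\varepsilon\tilde f,\qquad \dot y=-\tfrac{x}{\varepsilon}+y(\sigma-az)+\varepsilon\tilde g,\qquad \dot z=-1+b(x^2+y^2)+z^2+\varepsilon\tilde h,$$ with the properties listed in the context. Take $\nu_1>0$ and the ellipsoid $S_{\nu_1}=\{z^2+\frac{b}{a+1}(x^2+y^2)=1-\nu_1\}$. Then there exists $\varepsilon_0>0$ such that for every $\varepsilon\in(0,\varepsilon_0)$ and $|\sigma|\le\sigma_0\varepsilon$, the surface $S_{\nu_1}\cap\{-1\le z\le-\varepsilon|\log\varepsilon|\}$ is contained in the region $D$ and the flow of the system points outwards on it.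
   Context: Here $a>0$, $b>0$, $\sigma_0>0$ constants; $\tilde f,\tilde g,\tilde h$ are real analytic functions of $(x,y,z,\varepsilon,\sigma)$ with $\tilde f,\tilde g=\mathcal{O}(\|(x,y)\|)$ and $\tilde h=(z+1)\tilde h_1+\tilde h_2$, $\tilde h_1$ bounded, $\tilde h_2=\mathcal{O}(\|(x,y,z+1)\|^2)$. $p_-=(0,0,-1)$ is a saddle-focus equilibrium whose two-dimensional unstable manifold satisfies $W^u(p_-)\cap\{z\le0\}=\{\frac{b}{a+1}(x^2+y^2)+z^2=1+\varepsilon(1-z^2)\psi(z,\theta)\}$ with $\psi$ analytic, $2\pi$-periodic in the polar angle $\theta$, and $|\psi|,|\partial_z\psi|\le M$, $|\partial_\theta\psi|\le\varepsilon M$ for $z\le0$. $D$ is the closed region contained in $\{z\le0\}$ with boundary $\{z=0\}\cup W^u(p_-)$. *)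

theory Defs
  imports "HOL-Analysis.Analysis"
begin

text \<open>Real analyticity of a real-valued function on a Euclidean space: locally the sum of an
  (unconditionally, i.e. absolutely) convergent multivariate power series, multi-indices being
  functions from the basis to nat.\<close>
definition real_analytic_on :: "'a::euclidean_space set \<Rightarrow> ('a \<Rightarrow> real) \<Rightarrow> bool" where
  "real_analytic_on S f \<longleftrightarrow>
     (\<forall>x0\<in>S. \<exists>r>0. \<exists>c :: ('a \<Rightarrow> nat) \<Rightarrow> real. \<forall>x\<in>ball x0 r.
        ((\<lambda>\<alpha>. c \<alpha> * (\<Prod>i\<in>Basis. ((x - x0) \<bullet> i) ^ \<alpha> i)) has_sum f x)
          {\<alpha>. \<forall>i. i \<notin> Basis \<longrightarrow> \<alpha> i = 0})"

definition fieldX :: "real \<Rightarrow> (real \<Rightarrow> real \<Rightarrow> real \<Rightarrow> real \<Rightarrow> real \<Rightarrow> real)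
    \<Rightarrow> real \<Rightarrow> real \<Rightarrow> real \<Rightarrow> real \<Rightarrow> real \<Rightarrow> real" where
  "fieldX a f eps sg x y z = x * (sg - a * z) + y / eps + eps * f x y z eps sg"

definition fieldY :: "real \<Rightarrow> (real \<Rightarrow> real \<Rightarrow> real \<Rightarrow> real \<Rightarrow> real \<Rightarrow> real)
    \<Rightarrow> real \<Rightarrow> real \<Rightarrow> real \<Rightarrow> real \<Rightarrow> real \<Rightarrow> real" where
  "fieldY a g eps sg x y z = - x / eps + y * (sg - a * z) + eps * g x y z eps sg"

definition fieldZ :: "real \<Rightarrow> (real \<Rightarrow> real \<Rightarrow> real \<Rightarrow> real \<Rightarrow> real \<Rightarrow> real)
    \<Rightarrow> real \<Rightarrow> real \<Rightarrow> real \<Rightarrow> real \<Rightarrow> real \<Rightarrow> real" where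
  "fieldZ b h eps sg x y z = -1 + b * (x^2 + y^2) + z^2 + eps * h x y z eps sg"

definition ellF :: "real \<Rightarrow> real \<Rightarrow> real \<Rightarrow> real \<Rightarrow> real \<Rightarrow> real" where
  "ellF a b x y z = z^2 + b / (a + 1) * (x^2 + y^2)"

definition surf_piece :: "real \<Rightarrow> real \<Rightarrow> real \<Rightarrow> real \<Rightarrow> (real \<times> real \<times> real) set" where
  "surf_piece a b nu1 eps =
     {(x, y, z). ellF a b x y z = 1 - nu1 \<and> -1 \<le> z \<and> z \<le> - eps * \<bar>ln eps\<bar>}"

text \<open>The region D: the closed region in z <= 0 bounded by z = 0 and the unstable manifold
  {b/(a+1)(x^2+y^2) + z^2 = 1 + eps (1 - z^2) psi(z, theta)}, theta the polar angle of (x,y).\<close>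
definition regionD :: "real \<Rightarrow> real \<Rightarrow> (real \<Rightarrow> real \<Rightarrow> real) \<Rightarrow> real
    \<Rightarrow> (real \<times> real \<times> real) set" where
  "regionD a b psi eps =
     {(x, y, z). z \<le> 0 \<and>
        ellF a b x y z \<le> 1 + eps * (1 - z^2) * psi z (Arg (Complex x y))}"

definition points_outward :: "real \<Rightarrow> real \<Rightarrow> (real \<Rightarrow> real \<Rightarrow> real \<Rightarrow> real \<Rightarrow> real \<Rightarrow> real)
    \<Rightarrow> (real \<Rightarrow> real \<Rightarrow> real \<Rightarrow> real \<Rightarrow> real \<Rightarrow> real) \<Rightarrow> (real \<Rightarrow> real \<Rightarrow> real \<Rightarrow> real \<Rightarrow> real \<Rightarrow> real)
    \<Rightarrow> real \<Rightarrow> real \<Rightarrow> real \<Rightarrow> real \<Rightarrow> real \<Rightarrow> bool" where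
  "points_outward a b f g h eps sg x y z \<longleftrightarrow>
     2 * (b / (a + 1)) * x * fieldX a f eps sg x y z
   + 2 * (b / (a + 1)) * y * fieldY a g eps sg x y z
   + 2 * z * fieldZ b h eps sg x y z > 0"

end

theory Submission
  imports Defs
begin

text \<open>Write c = b/(a+1). On the ellipsoid c(x^2+y^2) = 1 - nu1 - z^2 the rotation terms
  y/eps, -x/eps cancel in the flux through the ellipsoid, and the quadratic terms collapse, so the
  flux is 2((1 - nu1 - z^2) sg - nu1 z + eps E) with E the contribution of the perturbations
  f, g, h. On the compact piece -1 <= z <= 0 of the ellipsoid E is bounded independently of eps
  and sg, while -nu1 z >= nu1 eps |log eps| dominates both |sg| <= sigma0 eps and eps |E| once
  eps is small. Containment in D only needs eps |M| < nu1, since the unstable manifold is an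
  O(eps) perturbation of the unit ellipsoid.\<close>

definition flux_perturbation :: "real \<Rightarrow> real \<Rightarrow> (real \<Rightarrow> real \<Rightarrow> real \<Rightarrow> real \<Rightarrow> real \<Rightarrow> real)
    \<Rightarrow> (real \<Rightarrow> real \<Rightarrow> real \<Rightarrow> real \<Rightarrow> real \<Rightarrow> real) \<Rightarrow> (real \<Rightarrow> real \<Rightarrow> real \<Rightarrow> real \<Rightarrow> real \<Rightarrow> real)
    \<Rightarrow> real \<Rightarrow> real \<Rightarrow> real \<Rightarrow> real \<Rightarrow> real \<Rightarrow> real" where
  "flux_perturbation a b f g h eps sg x y z =
     b / (a + 1) * (x * f x y z eps sg + y * g x y z eps sg) + z * h x y z eps sg"

lemma points_outward_on_ellipsoid_iff:
  assumes "a + 1 \<noteq> 0" "eps \<noteq> 0" "ellF a b x y z = 1 - nu1"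
  shows "points_outward a b f g h eps sg x y z \<longleftrightarrow>
         (1 - nu1 - z^2) * sg - nu1 * z + eps * flux_perturbation a b f g h eps sg x y z > 0"
proof -
  define c where "c = b / (a + 1)"
  have ell: "b / (a + 1) * (x^2 + y^2) = 1 - nu1 - z^2"
    using assms(3) unfolding ellF_def by linarith
  have ell': "b * (x^2 + y^2) = (a + 1) * (1 - nu1 - z^2)"
    unfolding ell[symmetric] using assms(1) by simp
  have "2 * (b / (a + 1)) * x * fieldX a f eps sg x y z
      + 2 * (b / (a + 1)) * y * fieldY a g eps sg x y z + 2 * z * fieldZ b h eps sg x y z
      = 2 * (b / (a + 1) * (x^2 + y^2)) * (sg - a * z) + 2 * z * (b * (x^2 + y^2) + z^2 - 1)
        + 2 * eps * flux_perturbation a b f g h eps sg x y z" (is "?flux = _")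
    using assms(2) unfolding fieldX_def fieldY_def fieldZ_def flux_perturbation_def c_def[symmetric]
    by (simp add: field_simps power2_eq_square)
  also have "\<dots> = 2 * ((1 - nu1 - z^2) * sg - nu1 * z + eps * flux_perturbation a b f g h eps sg x y z)"
    (is "_ = 2 * ?rhs")
    unfolding ell ell' by (simp add: algebra_simps power2_eq_square)
  finally have flux: "?flux = 2 * ?rhs" .
  show ?thesis
    unfolding points_outward_def flux by (simp only: zero_less_mult_iff) simp
qed

lemma surf_piece_z_bounds:
  assumes "0 \<le> eps" "(x, y, z) \<in> surf_piece a b nu1 eps"
  shows "-1 \<le> z" "z \<le> 0"
proof -
  have "0 \<le> eps * \<bar>ln eps\<bar>" using assms(1) by simp
  with assms(2) show "-1 \<le> z" "z \<le> 0" unfolding surf_piece_def by auto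
qed

lemma ellipsoid_xy_bound:
  assumes "a + 1 > 0" "b > 0" "nu1 \<ge> 0" "ellF a b x y z = 1 - nu1"
  shows "x^2 + y^2 \<le> (a + 1) / b"
proof -
  have "b / (a + 1) * (x^2 + y^2) \<le> 1"
    using assms(3,4) zero_le_power2[of z] unfolding ellF_def by linarith
  with assms(1,2) show ?thesis by (simp add: field_simps)
qed

lemma surf_piece_subset_regionD:
  assumes "0 \<le> eps" "eps * M < nu1" "\<And>z \<theta>. z \<le> 0 \<Longrightarrow> \<bar>psi z \<theta>\<bar> \<le> M"
  shows "surf_piece a b nu1 eps \<subseteq> regionD a b psi eps"
proof safe
  fix x y z assume xyz: "(x, y, z) \<in> surf_piece a b nu1 eps"
  define \<theta> where "\<theta> = Arg (Complex x y)"
  have z: "-1 \<le> z" "z \<le> 0" using surf_piece_z_bounds[OF assms(1) xyz] by auto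
  then have "0 \<le> 1 - z^2" "1 - z^2 \<le> 1" by (auto simp: abs_square_le_1)
  then have "\<bar>eps * (1 - z^2) * psi z \<theta>\<bar> \<le> eps * 1 * M"
    unfolding abs_mult using assms(1) assms(3)[OF z(2)] by (intro mult_mono) auto
  with assms(2) have "- nu1 \<le> eps * (1 - z^2) * psi z \<theta>" by linarith
  moreover have "ellF a b x y z = 1 - nu1" using xyz unfolding surf_piece_def by simp
  ultimately show "(x, y, z) \<in> regionD a b psi eps"
    unfolding regionD_def \<theta>_def using z by simp
qed

lemma abs_mult_le_of_sqrt_bound:
  fixes x r R F K :: real
  assumes "x^2 \<le> r" "r \<le> R" "\<bar>F\<bar> \<le> K * sqrt r"
  shows "\<bar>x * F\<bar> \<le> \<bar>K\<bar> * R"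
proof -
  have r: "0 \<le> r" using assms(1) zero_le_power2[of x] by linarith
  have "K * sqrt r \<le> \<bar>K\<bar> * sqrt r" using r by (intro mult_right_mono) auto
  moreover have "\<bar>x\<bar> \<le> sqrt r" using real_sqrt_le_mono[OF assms(1)] by simp
  ultimately have "\<bar>x\<bar> * \<bar>F\<bar> \<le> sqrt r * (\<bar>K\<bar> * sqrt r)"
    using assms(3) r by (intro mult_mono) auto
  also have "\<dots> = \<bar>K\<bar> * r" using r by simp
  also have "\<dots> \<le> \<bar>K\<bar> * R" using assms(2) by (intro mult_left_mono) auto
  finally show ?thesis by (simp add: abs_mult)
qed

lemma flux_perturbation_le:
  fixes x y z e s R u v Kf Kg K2 C :: real
  assumes f: "\<bar>f x y z e s\<bar> \<le> Kf * sqrt (x^2 + y^2)"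
    and g: "\<bar>g x y z e s\<bar> \<le> Kg * sqrt (x^2 + y^2)"
    and h: "h x y z e s = (z + 1) * u + v" "\<bar>u\<bar> \<le> C" "\<bar>v\<bar> \<le> K2 * (x^2 + y^2 + (z + 1)^2)"
    and r: "x^2 + y^2 \<le> R" and z: "-1 \<le> z" "z \<le> 0"
  shows "\<bar>flux_perturbation a b f g h e s x y z\<bar>
           \<le> \<bar>b / (a + 1)\<bar> * (\<bar>Kf\<bar> * R + \<bar>Kg\<bar> * R) + (\<bar>C\<bar> + \<bar>K2\<bar> * (R + 1))"
proof -
  define c where "c = b / (a + 1)"
  have "\<bar>x * f x y z e s\<bar> \<le> \<bar>Kf\<bar> * R" "\<bar>y * g x y z e s\<bar> \<le> \<bar>Kg\<bar> * R"
    by (rule abs_mult_le_of_sqrt_bound[OF _ r f] abs_mult_le_of_sqrt_bound[OF _ r g]; simp)+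
  then have "\<bar>x * f x y z e s + y * g x y z e s\<bar> \<le> \<bar>Kf\<bar> * R + \<bar>Kg\<bar> * R"
    using abs_triangle_ineq[of "x * f x y z e s" "y * g x y z e s"] by linarith
  then have fg: "\<bar>c * (x * f x y z e s + y * g x y z e s)\<bar> \<le> \<bar>c\<bar> * (\<bar>Kf\<bar> * R + \<bar>Kg\<bar> * R)"
    unfolding abs_mult[of c] by (intro mult_left_mono) auto
  have z1: "\<bar>z + 1\<bar> \<le> 1" "\<bar>z\<bar> \<le> 1" using z by auto
  have "\<bar>(z + 1) * u\<bar> \<le> 1 * \<bar>C\<bar>"
    unfolding abs_mult using z1 h(2) by (intro mult_mono) auto
  moreover have "\<bar>v\<bar> \<le> \<bar>K2\<bar> * (R + 1)"
  proof -
    have "(z + 1)^2 \<le> 1" using z1 by (simp add: abs_square_le_1)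
    then have "0 \<le> x^2 + y^2 + (z + 1)^2" "x^2 + y^2 + (z + 1)^2 \<le> R + 1" using r by auto
    then have "K2 * (x^2 + y^2 + (z + 1)^2) \<le> \<bar>K2\<bar> * (R + 1)" by (intro mult_mono) auto
    with h(3) show ?thesis by linarith
  qed
  moreover have "\<bar>z * h x y z e s\<bar> \<le> \<bar>h x y z e s\<bar>"
    unfolding abs_mult using z1 by (intro mult_left_le_one_le) auto
  ultimately have "\<bar>z * h x y z e s\<bar> \<le> \<bar>C\<bar> + \<bar>K2\<bar> * (R + 1)"
    using abs_triangle_ineq[of "(z + 1) * u" v] h(1) by simp
  with fg show ?thesis
    unfolding flux_perturbation_def c_def by linarith
qed

lemma flux_perturbation_bounded:
  fixes f g h :: "real \<Rightarrow> real \<Rightarrow> real \<Rightarrow> real \<Rightarrow> real \<Rightarrow> real" and R S :: real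
  assumes f_O: "\<And>B. compact B \<Longrightarrow> \<exists>K. \<forall>x y z e s. (x, y, z, e, s) \<in> B \<longrightarrow>
                 \<bar>f x y z e s\<bar> \<le> K * sqrt (x^2 + y^2)"
    and g_O: "\<And>B. compact B \<Longrightarrow> \<exists>K. \<forall>x y z e s. (x, y, z, e, s) \<in> B \<longrightarrow>
                 \<bar>g x y z e s\<bar> \<le> K * sqrt (x^2 + y^2)"
    and h_split: "\<exists>h1 h2 C.
        (\<forall>x y z e s. h x y z e s = (z + 1) * h1 x y z e s + h2 x y z e s) \<and>
        (\<forall>x y z e s. \<bar>h1 x y z e s\<bar> \<le> C) \<and>
        (\<forall>B. compact B \<longrightarrow> (\<exists>K. \<forall>x y z e s. (x, y, z, e, s) \<in> B \<longrightarrow>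
                 \<bar>h2 x y z e s\<bar> \<le> K * (x^2 + y^2 + (z + 1)^2)))"
  shows "\<exists>P. \<forall>x y z e s. x^2 + y^2 \<le> R \<longrightarrow> -1 \<le> z \<longrightarrow> z \<le> 0 \<longrightarrow>
           0 \<le> e \<longrightarrow> e \<le> 1 \<longrightarrow> \<bar>s\<bar> \<le> S \<longrightarrow>
           \<bar>flux_perturbation a b f g h e s x y z\<bar> \<le> P"
proof -
  obtain h1 h2 C where h: "\<forall>x y z e s. h x y z e s = (z + 1) * h1 x y z e s + h2 x y z e s"
    and h1: "\<forall>x y z e s. \<bar>h1 x y z e s\<bar> \<le> C"
    and h2_O: "\<forall>B. compact B \<longrightarrow> (\<exists>K. \<forall>x y z e s. (x, y, z, e, s) \<in> B \<longrightarrow>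
                 \<bar>h2 x y z e s\<bar> \<le> K * (x^2 + y^2 + (z + 1)^2))"
    using h_split by (elim exE conjE) (rule that)
  define B :: "(real \<times> real \<times> real \<times> real \<times> real) set" where
    "B = {-sqrt R..sqrt R} \<times> {-sqrt R..sqrt R} \<times> {-1..0} \<times> {0..1} \<times> {-S..S}"
  have B: "compact B" unfolding B_def by (intro compact_Times compact_Icc)
  obtain Kf where Kf: "\<forall>x y z e s. (x, y, z, e, s) \<in> B \<longrightarrow> \<bar>f x y z e s\<bar> \<le> Kf * sqrt (x^2 + y^2)"
    using f_O[OF B] by blast
  obtain Kg where Kg: "\<forall>x y z e s. (x, y, z, e, s) \<in> B \<longrightarrow> \<bar>g x y z e s\<bar> \<le> Kg * sqrt (x^2 + y^2)"
    using g_O[OF B] by blast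
  obtain K2 where K2: "\<forall>x y z e s. (x, y, z, e, s) \<in> B \<longrightarrow>
      \<bar>h2 x y z e s\<bar> \<le> K2 * (x^2 + y^2 + (z + 1)^2)"
    using h2_O B by blast
  show ?thesis
  proof (intro exI allI impI)
    fix x y z e s :: real
    assume r: "x^2 + y^2 \<le> R" and z: "-1 \<le> z" "z \<le> 0" and "0 \<le> e" "e \<le> 1" "\<bar>s\<bar> \<le> S"
    moreover have "\<bar>x\<bar> \<le> sqrt R" "\<bar>y\<bar> \<le> sqrt R"
      using real_sqrt_le_mono[of "x^2" R] real_sqrt_le_mono[of "y^2" R] r
        zero_le_power2[of x] zero_le_power2[of y] by simp_all
    ultimately have "(x, y, z, e, s) \<in> B" unfolding B_def by auto
    with Kf Kg K2 h h1 r z show "\<bar>flux_perturbation a b f g h e s x y z\<bar>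
        \<le> \<bar>b / (a + 1)\<bar> * (\<bar>Kf\<bar> * R + \<bar>Kg\<bar> * R) + (\<bar>C\<bar> + \<bar>K2\<bar> * (R + 1))"
      by (intro flux_perturbation_le) auto
  qed
qed

lemma less_mult_abs_ln_if_less_exp:
  fixes L nu eps :: real
  assumes "0 < nu" "0 < eps" "eps < exp (- L / nu)"
  shows "L < nu * \<bar>ln eps\<bar>"
proof -
  have "ln eps < - L / nu" using assms(2,3) by (metis ln_exp ln_less_cancel_iff exp_gt_zero)
  then have "L < nu * (- ln eps)" using assms(1) by (simp add: field_simps)
  also have "\<dots> \<le> nu * \<bar>ln eps\<bar>" using assms(1) by (intro mult_left_mono) auto
  finally show ?thesis .
qed

lemma points_outward_if_perturbation_dominated:
  assumes "a + 1 > 0" "b \<ge> 0" "nu1 \<ge> 0" "0 < eps" "(x, y, z) \<in> surf_piece a b nu1 eps"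
    and "\<bar>sg\<bar> \<le> sigma0 * eps" "\<bar>flux_perturbation a b f g h eps sg x y z\<bar> \<le> P"
    and "sigma0 + P < nu1 * \<bar>ln eps\<bar>"
  shows "points_outward a b f g h eps sg x y z"
proof -
  define E where "E = flux_perturbation a b f g h eps sg x y z"
  have ell: "ellF a b x y z = 1 - nu1" and top: "z \<le> - eps * \<bar>ln eps\<bar>"
    using assms(5) unfolding surf_piece_def by auto
  have "0 \<le> b / (a + 1) * (x^2 + y^2)" using assms(1,2) by simp
  then have "\<bar>1 - nu1 - z^2\<bar> \<le> 1"
    using ell assms(3) zero_le_power2[of z] unfolding ellF_def by linarith
  then have "\<bar>(1 - nu1 - z^2) * sg\<bar> \<le> 1 * \<bar>sg\<bar>"
    unfolding abs_mult by (intro mult_right_mono) auto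
  then have "- (sigma0 * eps) \<le> (1 - nu1 - z^2) * sg" using assms(6) by linarith
  moreover have "nu1 * (eps * \<bar>ln eps\<bar>) \<le> nu1 * (- z)"
    using top assms(3) by (intro mult_left_mono) auto
  moreover have "eps * (sigma0 + P) < eps * (nu1 * \<bar>ln eps\<bar>)"
    using assms(4,8) by simp
  moreover have "eps * (- E) \<le> eps * P"
    using assms(4,7) unfolding E_def by (intro mult_left_mono) auto
  ultimately have "(1 - nu1 - z^2) * sg - nu1 * z + eps * E > 0"
    by (simp add: algebra_simps)
  with assms(1,4) ell show ?thesis
    unfolding E_def by (subst points_outward_on_ellipsoid_iff) auto
qed

theorem lemma3p5:
  fixes a b sigma0 eps1 nu1 M :: real
    and f g h :: "real \<Rightarrow> real \<Rightarrow> real \<Rightarrow> real \<Rightarrow> real \<Rightarrow> real"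
    and psi :: "real \<Rightarrow> real \<Rightarrow> real \<Rightarrow> real \<Rightarrow> real"
  assumes a_pos: "a > 0" and b_pos: "b > 0" and sigma0_pos: "sigma0 > 0"
    and eps1_pos: "eps1 > 0" and nu1_pos: "nu1 > 0"
    and f_an: "real_analytic_on UNIV (\<lambda>(x, y, z, e, s). f x y z e s)"
    and g_an: "real_analytic_on UNIV (\<lambda>(x, y, z, e, s). g x y z e s)"
    and h_an: "real_analytic_on UNIV (\<lambda>(x, y, z, e, s). h x y z e s)"
    and f_O: "\<And>B. compact B \<Longrightarrow> \<exists>K. \<forall>x y z e s. (x, y, z, e, s) \<in> B \<longrightarrow>
                 \<bar>f x y z e s\<bar> \<le> K * sqrt (x^2 + y^2)"
    and g_O: "\<And>B. compact B \<Longrightarrow> \<exists>K. \<forall>x y z e s. (x, y, z, e, s) \<in> B \<longrightarrow>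
                 \<bar>g x y z e s\<bar> \<le> K * sqrt (x^2 + y^2)"
    and h_split: "\<exists>h1 h2 C.
        (\<forall>x y z e s. h x y z e s = (z + 1) * h1 x y z e s + h2 x y z e s) \<and>
        (\<forall>x y z e s. \<bar>h1 x y z e s\<bar> \<le> C) \<and>
        (\<forall>B. compact B \<longrightarrow> (\<exists>K. \<forall>x y z e s. (x, y, z, e, s) \<in> B \<longrightarrow>
                 \<bar>h2 x y z e s\<bar> \<le> K * (x^2 + y^2 + (z + 1)^2)))"
    and psi_props: "\<And>e s. 0 < e \<Longrightarrow> e < eps1 \<Longrightarrow> \<bar>s\<bar> \<le> sigma0 * e \<Longrightarrow>
        (\<exists>U. open U \<and> {p. fst p \<le> 0} \<subseteq> U \<and>
             real_analytic_on U (\<lambda>(z, \<theta>). psi e s z \<theta>)) \<and>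
        (\<forall>z \<theta>. psi e s z (\<theta> + 2 * pi) = psi e s z \<theta>) \<and>
        (\<forall>z \<theta>. z \<le> 0 \<longrightarrow>
            \<bar>psi e s z \<theta>\<bar> \<le> M \<and>
            \<bar>deriv (\<lambda>z'. psi e s z' \<theta>) z\<bar> \<le> M \<and>
            \<bar>deriv (\<lambda>t. psi e s z t) \<theta>\<bar> \<le> e * M)"
  shows "\<exists>eps0>0. \<forall>eps sg. 0 < eps \<and> eps < eps0 \<and> \<bar>sg\<bar> \<le> sigma0 * eps \<longrightarrow>
           surf_piece a b nu1 eps \<subseteq> regionD a b (psi eps sg) eps \<and>
           (\<forall>(x, y, z) \<in> surf_piece a b nu1 eps. points_outward a b f g h eps sg x y z)"
proof -
  obtain P where P: "\<forall>x y z e s. x^2 + y^2 \<le> (a + 1) / b \<longrightarrow> -1 \<le> z \<longrightarrow> z \<le> 0 \<longrightarrow>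
      0 \<le> e \<longrightarrow> e \<le> 1 \<longrightarrow> \<bar>s\<bar> \<le> sigma0 \<longrightarrow> \<bar>flux_perturbation a b f g h e s x y z\<bar> \<le> P"
    using flux_perturbation_bounded[OF f_O g_O h_split] by blast
  define eps0 where "eps0 = min (min eps1 1) (min (exp (- (sigma0 + P) / nu1)) (nu1 / (\<bar>M\<bar> + 1)))"
  show ?thesis
  proof (intro exI[of _ eps0] conjI allI impI)
    show "eps0 > 0" using eps1_pos nu1_pos unfolding eps0_def by simp
    fix eps sg assume "0 < eps \<and> eps < eps0 \<and> \<bar>sg\<bar> \<le> sigma0 * eps"
    then have eps: "0 < eps" "eps < eps1" "eps \<le> 1" "eps < exp (- (sigma0 + P) / nu1)"
        "eps * (\<bar>M\<bar> + 1) < nu1" and sg: "\<bar>sg\<bar> \<le> sigma0 * eps"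
      using nu1_pos unfolding eps0_def by (auto simp: field_simps)
    have sg0: "\<bar>sg\<bar> \<le> sigma0" using sg mult_left_le[OF eps(3), of sigma0] sigma0_pos by linarith
    have M: "\<And>z \<theta>. z \<le> 0 \<Longrightarrow> \<bar>psi eps sg z \<theta>\<bar> \<le> \<bar>M\<bar>"
      using psi_props[OF eps(1,2) sg] by (blast intro: order_trans[OF _ abs_ge_self])
    show "surf_piece a b nu1 eps \<subseteq> regionD a b (psi eps sg) eps"
      using surf_piece_subset_regionD[of eps "\<bar>M\<bar>", OF _ _ M] eps(1,5) by (simp add: algebra_simps)
    have "points_outward a b f g h eps sg x y z" if xyz: "(x, y, z) \<in> surf_piece a b nu1 eps" for x y z
    proof -
      have "ellF a b x y z = 1 - nu1" using xyz unfolding surf_piece_def by simp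
      then have "x^2 + y^2 \<le> (a + 1) / b"
        using a_pos b_pos nu1_pos by (intro ellipsoid_xy_bound) auto
      with P surf_piece_z_bounds[OF _ xyz] eps(1,3) sg0
      have "\<bar>flux_perturbation a b f g h eps sg x y z\<bar> \<le> P" by simp
      with a_pos b_pos nu1_pos less_mult_abs_ln_if_less_exp[OF nu1_pos eps(1,4)] show ?thesis
        by (intro points_outward_if_perturbation_dominated[OF _ _ _ eps(1) xyz sg]) auto
    qed
    then show "\<forall>(x, y, z) \<in> surf_piece a b nu1 eps. points_outward a b f g h eps sg x y z" by auto
  qed
qed

end
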